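(* Let $(\mathcal{K},[\cdot,\cdot])$ be a Krein space with fundamental symmetry $J$, let $\{k_n\}_{n\in\mathbb{N}}$ be a frame for the Krein space $\mathcal{K}$, and let $S$ be its frame operator. Then: (i) $\{S^{-1}k_n\}_{n}$ is a dual frame of $\{k_n\}_n$ for the Krein space $\mathcal{K}$; (ii) $\{JS^{-1}k_n\}_n$ is a dual frame of $\{Jk_n\}_n$ for the Krein space $\mathcal{K}$; (iii) $\{JS^{-1}k_n\}_n$ is a dual frame of $\{k_n\}_n$ for the Hilbert space $(\mathcal{K},[\cdot,\cdot]_J)$; (iv) $\{S^{-1}k_n\}_n$ is a dual frame of $\{Jk_n\}_n$ for the Hilbert space $(\mathcal{K},[\cdot,\cdot]_J)$. Moreover, if $0<A\leq B<\infty$ are frame bounds for $\{k_n\}_n$ (as a frame for the Krein space $\mathcal{K}$), then all these dual frames admit the frame bounds $0<B^{-1}\leq A^{-1}<\infty$.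
   Context: A Krein space $(\mathcal{K},[\cdot,\cdot])$ has a fundamental decomposition $\mathcal{K}=\mathcal{K}_+\oplus\mathcal{K}_-$ and fundamental symmetry $J(k^++k^-)=k^+-k^-$, such that $[h,k]_J:=[h,Jk]$ makes $\mathcal{K}$ a Hilbert space; $\|k\|_J:=\sqrt{[k,k]_J}$. A countable sequence $\{k_n\}$ is a frame for the Krein space $\mathcal{K}$ with frame bounds $A\le B$ if $A\|k\|_J^2\leq\sum_n|[k_n,k]|^2\leq B\|k\|_J^2$ for all $k$; a frame for the Hilbert space $(\mathcal{K},[\cdot,\cdot]_J)$ is defined likewise with $[k_n,k]_J$ in place of $[k_n,k]$. The frame operator of a frame $\{k_n\}$ for the Krein space $\mathcal{K}$ is $S=T\tilde JT^*$ where $T:\mathfrak{k}_2(\mathbb{N})\to\mathcal{K}$, $T(\alpha_n)=\sum\alpha_nk_n$, $\mathfrak{k}_2(\mathbb{N})$ is $\ell_2(\mathbb{N})$ with a Krein inner product whose fundamental symmetry $\tilde J$ makes $[\cdot,\cdot]_{\tilde J}$ the standard $\ell_2$ inner product, and $T^*$ is the Krein adjoint; equivalently $Sk=\sum_n[k_n,k]k_n$. $S$ is invertible with bounded inverse. A dual frame of a frame $\{k_n\}$ for the Krein space $\mathcal{K}$ is a frame $\{h_n\}$ for the Krein space $\mathcal{K}$ with $k=\sum_n[h_n,k]k_n$ for all $k\in\mathcal{K}$. A dual frame of a frame $\{f_n\}$ for the Hilbert space $(\mathcal{K},[\cdot,\cdot]_J)$ is a frame $\{g_n\}$ for that Hilbert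 space with $k=\sum_n[g_n,k]_Jf_n=\sum_n[f_n,k]_Jg_n$ for all $k$. *)

theory Defs
  imports "HOL-Analysis.Analysis"
begin

text \<open>A complex Hilbert space is modelled as a real Hilbert space (type class
real_inner + complete_space) together with a complex structure Iop
(multiplication by the imaginary unit): a real-linear isometry with Iop o Iop = -id.\<close>

definition complex_structure :: "('a::real_inner \<Rightarrow> 'a) \<Rightarrow> bool" where
  "complex_structure Iop \<longleftrightarrow> linear Iop \<and> (\<forall>x. Iop (Iop x) = - x)
     \<and> (\<forall>x y. inner (Iop x) (Iop y) = inner x y)"

definition scaleC_cs :: "('a::real_vector \<Rightarrow> 'a) \<Rightarrow> complex \<Rightarrow> 'a \<Rightarrow> 'a" where
  "scaleC_cs Iop c x = Re c *\<^sub>R x + Im c *\<^sub>R Iop x"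

text \<open>complex Hilbert inner product [x,y]_J (conjugate-linear in x, linear in y)\<close>
definition cinner_cs :: "('a::real_inner \<Rightarrow> 'a) \<Rightarrow> 'a \<Rightarrow> 'a \<Rightarrow> complex" where
  "cinner_cs Iop x y = Complex (inner x y) (inner (Iop x) y)"

text \<open>Krein space with Krein inner product kip and fundamental symmetry J:
J is a complex-linear involution, kip is Hermitian, and kip x (J y) is the
Hilbert inner product of the type.  (Then K+ = {x. J x = x}, K- = {x. J x = -x}
is a fundamental decomposition with J(k+ + k-) = k+ - k-.)\<close>
definition krein_space ::
  "('a::{real_inner,complete_space} \<Rightarrow> 'a) \<Rightarrow> ('a \<Rightarrow> 'a \<Rightarrow> complex) \<Rightarrow> ('a \<Rightarrow> 'a) \<Rightarrow> bool" where
  "krein_space Iop kip J \<longleftrightarrow> complex_structure Iop \<and> linear J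
     \<and> (\<forall>x. J (Iop x) = Iop (J x)) \<and> (\<forall>x. J (J x) = x)
     \<and> (\<forall>x y. kip y x = cnj (kip x y))
     \<and> (\<forall>x y. kip x (J y) = cinner_cs Iop x y)"

text \<open>Frame for the Krein space with bounds A, B (norm = J-norm)\<close>
definition krein_frame_bounds ::
  "('a::real_inner \<Rightarrow> 'a \<Rightarrow> complex) \<Rightarrow> (nat \<Rightarrow> 'a) \<Rightarrow> real \<Rightarrow> real \<Rightarrow> bool" where
  "krein_frame_bounds kip k A B \<longleftrightarrow> 0 < A \<and> A \<le> B \<and>
     (\<forall>x. summable (\<lambda>n. (cmod (kip (k n) x))\<^sup>2)
        \<and> A * (norm x)\<^sup>2 \<le> (\<Sum>n. (cmod (kip (k n) x))\<^sup>2)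
        \<and> (\<Sum>n. (cmod (kip (k n) x))\<^sup>2) \<le> B * (norm x)\<^sup>2)"

definition krein_frame :: "('a::real_inner \<Rightarrow> 'a \<Rightarrow> complex) \<Rightarrow> (nat \<Rightarrow> 'a) \<Rightarrow> bool" where
  "krein_frame kip k \<longleftrightarrow> (\<exists>A B. krein_frame_bounds kip k A B)"

definition hilbert_frame_bounds ::
  "('a::real_inner \<Rightarrow> 'a) \<Rightarrow> (nat \<Rightarrow> 'a) \<Rightarrow> real \<Rightarrow> real \<Rightarrow> bool" where
  "hilbert_frame_bounds Iop k A B \<longleftrightarrow> krein_frame_bounds (cinner_cs Iop) k A B"

definition hilbert_frame :: "('a::real_inner \<Rightarrow> 'a) \<Rightarrow> (nat \<Rightarrow> 'a) \<Rightarrow> bool" where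
  "hilbert_frame Iop k \<longleftrightarrow> (\<exists>A B. hilbert_frame_bounds Iop k A B)"

definition frame_op ::
  "('a::{real_normed_vector} \<Rightarrow> 'a) \<Rightarrow> ('a \<Rightarrow> 'a \<Rightarrow> complex) \<Rightarrow> (nat \<Rightarrow> 'a) \<Rightarrow> 'a \<Rightarrow> 'a" where
  "frame_op Iop kip k x = (\<Sum>n. scaleC_cs Iop (kip (k n) x) (k n))"

definition krein_dual_frame ::
  "('a::real_inner \<Rightarrow> 'a) \<Rightarrow> ('a \<Rightarrow> 'a \<Rightarrow> complex) \<Rightarrow> (nat \<Rightarrow> 'a) \<Rightarrow> (nat \<Rightarrow> 'a) \<Rightarrow> bool" where
  "krein_dual_frame Iop kip h k \<longleftrightarrow> krein_frame kip h \<and>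
     (\<forall>x. (\<lambda>n. scaleC_cs Iop (kip (h n) x) (k n)) sums x)"

definition hilbert_dual_frame ::
  "('a::real_inner \<Rightarrow> 'a) \<Rightarrow> (nat \<Rightarrow> 'a) \<Rightarrow> (nat \<Rightarrow> 'a) \<Rightarrow> bool" where
  "hilbert_dual_frame Iop g f \<longleftrightarrow> hilbert_frame Iop g \<and>
     (\<forall>x. (\<lambda>n. scaleC_cs Iop (cinner_cs Iop (g n) x) (f n)) sums x
        \<and> (\<lambda>n. scaleC_cs Iop (cinner_cs Iop (f n) x) (g n)) sums x)"

end

theory Submission
  imports Defs
begin

text \<open>Since \<open>[x, y] = [x, J y]\<^sub>J\<close> and \<open>J\<close> is a unitary involution commuting with the
  complex structure, a frame \<open>{k\<^sub>n}\<close> for the Krein space is a frame with the same bounds for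
  the Hilbert space \<open>(K, [\<cdot>,\<cdot>]\<^sub>J)\<close>, and its Krein frame operator is \<open>S = S\<^sub>J J\<close>, where
  \<open>S\<^sub>J x = \<Sum> [k\<^sub>n, x]\<^sub>J k\<^sub>n\<close> is the Hilbert frame operator. \<open>S\<^sub>J\<close> is self-adjoint with
  \<open>A \<le> S\<^sub>J \<le> B\<close>; it is onto because the energy \<open>[S\<^sub>J r, r]\<^sub>J\<close> contracts by the factor
  \<open>1 - A/B\<close> under \<open>r \<mapsto> r - S\<^sub>J r / B\<close>, so a Neumann series inverts it. Hence
  \<open>S\<^sup>-\<^sup>1 = J S\<^sub>J\<^sup>-\<^sup>1\<close>, the canonical dual \<open>{S\<^sub>J\<^sup>-\<^sup>1 k\<^sub>n}\<close> is a Hilbert dual frame with bounds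
  \<open>1/B, 1/A\<close>, and all four statements follow from it by applying \<open>J\<close> to either family.\<close>

text \<open>The library versions of these two facts are stated for class \<open>banach\<close>, which the sort
  \<open>{real_inner, complete_space}\<close> used here does not provide.\<close>

lemma summable_Cauchy_complete:
  fixes f :: "nat \<Rightarrow> 'a::{real_normed_vector,complete_space}"
  assumes "\<And>e. e > 0 \<Longrightarrow> \<exists>N. \<forall>m\<ge>N. \<forall>n. norm (sum f {m..<n}) < e"
  shows "summable f"
  unfolding summable_iff_convergent Cauchy_convergent_iff [symmetric] Cauchy_iff
proof clarify
  fix e :: real
  assume "0 < e"
  with assms obtain N where N: "\<And>m n. m \<ge> N \<Longrightarrow> norm (sum f {m..<n}) < e"
    by blast
  have "norm (sum f {..<m} - sum f {..<n}) < e" if "m \<ge> N" "n \<ge> N" for m n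
  proof (cases m n rule: le_cases)
    assume "m \<le> n"
    then show ?thesis
      by (metis N finite_lessThan lessThan_minus_lessThan lessThan_subset_iff norm_minus_commute
          sum_diff \<open>m \<ge> N\<close>)
  next
    assume "n \<le> m"
    then show ?thesis
      by (metis N finite_lessThan lessThan_minus_lessThan lessThan_subset_iff sum_diff \<open>n \<ge> N\<close>)
  qed
  then show "\<exists>M. \<forall>m\<ge>M. \<forall>n\<ge>M. norm (sum f {..<m} - sum f {..<n}) < e"
    by blast
qed

lemma summable_comparison_complete:
  fixes f :: "nat \<Rightarrow> 'a::{real_normed_vector,complete_space}"
  assumes "\<And>n. norm (f n) \<le> g n" and "summable g"
  shows "summable f"
proof (rule summable_Cauchy_complete)
  fix e :: real
  assume "e > 0"
  then obtain N where N: "\<And>m n. m \<ge> N \<Longrightarrow> norm (sum g {m..<n}) < e"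
    using assms(2) by (fastforce simp: summable_Cauchy)
  have "norm (sum f {m..<n}) < e" if "m \<ge> N" for m n
  proof -
    have "norm (sum f {m..<n}) \<le> sum g {m..<n}"
      by (rule sum_norm_le) (rule assms(1))
    also have "\<dots> \<le> norm (sum g {m..<n})"
      by simp
    finally show ?thesis
      using N[OF that, of n] by linarith
  qed
  then show "\<exists>N. \<forall>m\<ge>N. \<forall>n. norm (sum f {m..<n}) < e"
    by blast
qed

lemma sum_inner_le_sqrt_sum_squares:
  fixes a b :: "'i \<Rightarrow> 'a::real_inner"
  shows "(\<Sum>i\<in>F. inner (a i) (b i)) \<le> sqrt (\<Sum>i\<in>F. (norm (a i))\<^sup>2) * sqrt (\<Sum>i\<in>F. (norm (b i))\<^sup>2)"
proof -
  have "(\<Sum>i\<in>F. inner (a i) (b i)) \<le> (\<Sum>i\<in>F. \<bar>norm (a i)\<bar> * \<bar>norm (b i)\<bar>)"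
    by (intro sum_mono) (simp add: norm_cauchy_schwarz)
  also have "\<dots> \<le> L2_set (\<lambda>i. norm (a i)) F * L2_set (\<lambda>i. norm (b i)) F"
    by (rule L2_set_mult_ineq)
  finally show ?thesis
    by (simp add: L2_set_def)
qed

lemma sums_inner_le_sqrt_suminf_squares:
  fixes a b :: "nat \<Rightarrow> 'a::real_inner"
  assumes "summable (\<lambda>n. (norm (a n))\<^sup>2)" and "summable (\<lambda>n. (norm (b n))\<^sup>2)"
    and "(\<lambda>n. inner (a n) (b n)) sums t"
  shows "t \<le> sqrt (\<Sum>n. (norm (a n))\<^sup>2) * sqrt (\<Sum>n. (norm (b n))\<^sup>2)"
proof (rule LIMSEQ_le_const2[OF assms(3)[unfolded sums_def]], intro exI allI impI)
  fix N :: nat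
  have "(\<Sum>i<N. inner (a i) (b i)) \<le> sqrt (\<Sum>i<N. (norm (a i))\<^sup>2) * sqrt (\<Sum>i<N. (norm (b i))\<^sup>2)"
    by (rule sum_inner_le_sqrt_sum_squares)
  also have "\<dots> \<le> sqrt (\<Sum>n. (norm (a n))\<^sup>2) * sqrt (\<Sum>n. (norm (b n))\<^sup>2)"
    using assms(1,2)
    by (intro mult_mono real_sqrt_le_mono sum_le_suminf) (auto intro: suminf_nonneg sum_nonneg)
  finally show "(\<Sum>i<N. inner (a i) (b i)) \<le> sqrt (\<Sum>n. (norm (a n))\<^sup>2) * sqrt (\<Sum>n. (norm (b n))\<^sup>2)" .
qed

lemma le_if_mult_self_le:
  fixes x c :: real
  assumes "x * x \<le> c * x" and "0 \<le> x" and "0 \<le> c"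
  shows "x \<le> c"
  using assms by (cases "x = 0") (auto intro: mult_right_le_imp_le)

lemma linear_if_symmetric:
  fixes T :: "'a::real_inner \<Rightarrow> 'a"
  assumes "\<And>x y. inner (T x) y = inner x (T y)"
  shows "linear T"
proof (rule linearI)
  show "T (x + y) = T x + T y" for x y
    by (rule vector_eq_rdot[THEN iffD1]) (simp add: assms inner_add_left inner_add_right)
  show "T (r *\<^sub>R x) = r *\<^sub>R T x" for r x
    by (rule vector_eq_rdot[THEN iffD1]) (simp add: assms)
qed

lemma symmetric_sums_unique:
  fixes T :: "'a::real_inner \<Rightarrow> 'a"
  assumes symmetric: "\<And>x y. inner (T x) y = inner x (T y)"
    and "u sums s" and "(\<lambda>n. T (u n)) sums t"
  shows "T s = t"
proof (rule vector_eq_rdot[THEN iffD1], rule allI)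
  fix z
  have "(\<lambda>n. inner (u n) (T z)) sums inner s (T z)"
    by (rule bounded_linear.sums[OF bounded_linear_inner_left assms(2)])
  moreover have "(\<lambda>n. inner (T (u n)) z) sums inner t z"
    by (rule bounded_linear.sums[OF bounded_linear_inner_left assms(3)])
  ultimately show "inner (T s) z = inner t z"
    by (simp add: symmetric sums_unique2)
qed

lemma krein_frame_bounds_transfer:
  assumes "\<And>n x. p (h n) x = q (h' n) (T x)" and "\<And>x. norm (T x) = norm x" and "surj T"
  shows "krein_frame_bounds p h a b \<longleftrightarrow> krein_frame_bounds q h' a b"
proof -
  define P where "P y \<longleftrightarrow> summable (\<lambda>n. (cmod (q (h' n) y))\<^sup>2)
        \<and> a * (norm y)\<^sup>2 \<le> (\<Sum>n. (cmod (q (h' n) y))\<^sup>2)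
        \<and> (\<Sum>n. (cmod (q (h' n) y))\<^sup>2) \<le> b * (norm y)\<^sup>2" for y
  have P_T: "(summable (\<lambda>n. (cmod (p (h n) x))\<^sup>2)
        \<and> a * (norm x)\<^sup>2 \<le> (\<Sum>n. (cmod (p (h n) x))\<^sup>2)
        \<and> (\<Sum>n. (cmod (p (h n) x))\<^sup>2) \<le> b * (norm x)\<^sup>2) \<longleftrightarrow> P (T x)" for x
    unfolding P_def assms(1,2) ..
  have "(\<forall>x. P (T x)) \<longleftrightarrow> (\<forall>y. P y)"
    using assms(3) by (metis surjD)
  then show ?thesis
    unfolding krein_frame_bounds_def P_T by (simp add: P_def)
qed

locale complex_structure_space =
  fixes Iop :: "'a::{real_inner,complete_space} \<Rightarrow> 'a"
  assumes complex_structure: "complex_structure Iop"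
begin

lemma Iop_Iop [simp]: "Iop (Iop x) = - x"
  using complex_structure unfolding complex_structure_def by blast

lemma inner_Iop_Iop [simp]: "inner (Iop x) (Iop y) = inner x y"
  using complex_structure unfolding complex_structure_def by blast

lemma inner_Iop_left: "inner (Iop x) y = - inner x (Iop y)"
  using inner_Iop_Iop[of "Iop x" y] by simp

lemma cinner_Iop_right: "cinner_cs Iop u (Iop x) = \<i> * cinner_cs Iop u x"
  by (simp add: cinner_cs_def complex_eq_iff inner_Iop_left)

lemma inner_scaleC_left: "inner (scaleC_cs Iop c u) x = inner c (cinner_cs Iop u x)"
  by (simp add: scaleC_cs_def cinner_cs_def inner_complex_def inner_add_left)

lemma scaleC_commute:
  assumes "linear L" and "\<And>x. L (Iop x) = Iop (L x)"
  shows "L (scaleC_cs Iop c u) = scaleC_cs Iop c (L u)"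
  using assms by (simp add: scaleC_cs_def linear_add linear_scale)

lemma cinner_symmetric_left:
  assumes "\<And>x y. inner (T x) y = inner x (T y)" and "\<And>x. T (Iop x) = Iop (T x)"
  shows "cinner_cs Iop (T u) x = cinner_cs Iop u (T x)"
  by (simp add: cinner_cs_def complex_eq_iff assms(1) flip: assms(2))

end

locale hilbert_frame_space = complex_structure_space +
  fixes f :: "nat \<Rightarrow> 'a::{real_inner,complete_space}" and A B :: real
  assumes frame_bounds: "hilbert_frame_bounds Iop f A B"
begin

lemma frame_bounds_pos: "0 < A" "A \<le> B" "0 < B"
  using frame_bounds unfolding hilbert_frame_bounds_def krein_frame_bounds_def by auto

lemma summable_frame_coeffs: "summable (\<lambda>n. (cmod (cinner_cs Iop (f n) x))\<^sup>2)"
  using frame_bounds unfolding hilbert_frame_bounds_def krein_frame_bounds_def by auto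

lemma lower_frame_bound: "A * (norm x)\<^sup>2 \<le> (\<Sum>n. (cmod (cinner_cs Iop (f n) x))\<^sup>2)"
  using frame_bounds unfolding hilbert_frame_bounds_def krein_frame_bounds_def by auto

lemma upper_frame_bound: "(\<Sum>n. (cmod (cinner_cs Iop (f n) x))\<^sup>2) \<le> B * (norm x)\<^sup>2"
  using frame_bounds unfolding hilbert_frame_bounds_def krein_frame_bounds_def by auto

lemma norm_sum_synthesis_le:
  assumes "finite F"
  shows "norm (\<Sum>n\<in>F. scaleC_cs Iop (a n) (f n)) \<le> sqrt B * sqrt (\<Sum>n\<in>F. (cmod (a n))\<^sup>2)"
proof -
  define v where "v = (\<Sum>n\<in>F. scaleC_cs Iop (a n) (f n))"
  have "(\<Sum>n\<in>F. (cmod (cinner_cs Iop (f n) v))\<^sup>2) \<le> (\<Sum>n. (cmod (cinner_cs Iop (f n) v))\<^sup>2)"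
    by (rule sum_le_suminf[OF summable_frame_coeffs assms]) simp
  also have "\<dots> \<le> B * (norm v)\<^sup>2"
    by (rule upper_frame_bound)
  finally have coeffs: "sqrt (\<Sum>n\<in>F. (cmod (cinner_cs Iop (f n) v))\<^sup>2) \<le> sqrt B * norm v"
    by (metis real_sqrt_le_mono real_sqrt_mult real_sqrt_abs abs_norm_cancel)
  have "norm v * norm v = inner v v"
    by (simp add: power2_norm_eq_inner[symmetric] power2_eq_square)
  also have "\<dots> = (\<Sum>n\<in>F. inner (a n) (cinner_cs Iop (f n) v))"
    unfolding v_def by (simp only: inner_sum_left inner_scaleC_left)
  also have "\<dots> \<le> sqrt (\<Sum>n\<in>F. (cmod (a n))\<^sup>2) * sqrt (\<Sum>n\<in>F. (cmod (cinner_cs Iop (f n) v))\<^sup>2)"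
    by (rule sum_inner_le_sqrt_sum_squares)
  also have "\<dots> \<le> sqrt (\<Sum>n\<in>F. (cmod (a n))\<^sup>2) * (sqrt B * norm v)"
    by (intro mult_left_mono coeffs) (auto intro: sum_nonneg)
  finally have "norm v * norm v \<le> (sqrt B * sqrt (\<Sum>n\<in>F. (cmod (a n))\<^sup>2)) * norm v"
    by (simp only: ac_simps)
  then have "norm v \<le> sqrt B * sqrt (\<Sum>n\<in>F. (cmod (a n))\<^sup>2)"
    by (rule le_if_mult_self_le) (use frame_bounds_pos in \<open>auto intro!: mult_nonneg_nonneg sum_nonneg\<close>)
  then show ?thesis
    by (simp only: v_def)
qed

lemma summable_synthesis:
  assumes "summable (\<lambda>n. (cmod (a n))\<^sup>2)"
  shows "summable (\<lambda>n. scaleC_cs Iop (a n) (f n))"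
proof (rule summable_Cauchy_complete)
  fix e :: real
  assume "0 < e"
  then have "0 < (e / sqrt B)\<^sup>2"
    using frame_bounds_pos by simp
  then obtain N where "\<And>m n. m \<ge> N \<Longrightarrow> norm (\<Sum>i\<in>{m..<n}. (cmod (a i))\<^sup>2) < (e / sqrt B)\<^sup>2"
    using assms unfolding summable_Cauchy by blast
  then have N: "(\<Sum>i\<in>{m..<n}. (cmod (a i))\<^sup>2) < (e / sqrt B)\<^sup>2" if "m \<ge> N" for m n
    using that by (simp add: sum_nonneg)
  have "norm (\<Sum>i\<in>{m..<n}. scaleC_cs Iop (a i) (f i)) < e" if "m \<ge> N" for m n
  proof -
    have "sqrt (\<Sum>i\<in>{m..<n}. (cmod (a i))\<^sup>2) < e / sqrt B"
      using N[OF that] \<open>0 < e\<close> frame_bounds_pos by (simp add: real_less_lsqrt)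
    then have "sqrt B * sqrt (\<Sum>i\<in>{m..<n}. (cmod (a i))\<^sup>2) < e"
      using frame_bounds_pos by (simp add: field_simps)
    then show ?thesis
      using norm_sum_synthesis_le[of "{m..<n}" a] by simp
  qed
  then show "\<exists>N. \<forall>m\<ge>N. \<forall>n. norm (\<Sum>i\<in>{m..<n}. scaleC_cs Iop (a i) (f i)) < e"
    by blast
qed

abbreviation S :: "'a \<Rightarrow> 'a" where "S \<equiv> frame_op Iop (cinner_cs Iop) f"

lemma frame_op_sums: "(\<lambda>n. scaleC_cs Iop (cinner_cs Iop (f n) x) (f n)) sums S x"
  unfolding frame_op_def by (intro summable_sums summable_synthesis summable_frame_coeffs)

lemma inner_frame_op_sums:
  "(\<lambda>n. inner (cinner_cs Iop (f n) x) (cinner_cs Iop (f n) y)) sums inner (S x) y"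
  using bounded_linear.sums[OF bounded_linear_inner_left[of y] frame_op_sums[of x]]
  by (simp add: inner_scaleC_left)

lemma inner_frame_op_self: "inner (S x) x = (\<Sum>n. (cmod (cinner_cs Iop (f n) x))\<^sup>2)"
  using sums_unique[OF inner_frame_op_sums[of x x]] by (simp add: power2_norm_eq_inner)

lemma frame_op_symmetric: "inner (S x) y = inner x (S y)"
proof -
  have "(\<lambda>n. inner (cinner_cs Iop (f n) x) (cinner_cs Iop (f n) y)) sums inner x (S y)"
    using inner_frame_op_sums[of y x] by (simp add: inner_commute)
  then show ?thesis
    by (rule sums_unique2[OF inner_frame_op_sums])
qed

lemma linear_frame_op: "linear S"
  by (rule linear_if_symmetric[OF frame_op_symmetric])

lemma frame_op_Iop: "S (Iop x) = Iop (S x)"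
proof -
  have "inner (S (Iop x)) z = inner (Iop (S x)) z" for z
  proof -
    have "(\<lambda>n. - inner (cinner_cs Iop (f n) x) (cinner_cs Iop (f n) (Iop z))) sums inner (S (Iop x)) z"
      using inner_frame_op_sums[of "Iop x" z] by (simp add: cinner_Iop_right inner_complex_def)
    moreover have "(\<lambda>n. - inner (cinner_cs Iop (f n) x) (cinner_cs Iop (f n) (Iop z))) sums inner (Iop (S x)) z"
      using sums_minus[OF inner_frame_op_sums[of x "Iop z"]] by (simp add: inner_Iop_left)
    ultimately show ?thesis
      by (rule sums_unique2)
  qed
  then show ?thesis
    by (rule vector_eq_rdot[THEN iffD1, OF allI])
qed

lemma frame_op_lower: "A * (norm x)\<^sup>2 \<le> inner (S x) x"
  using lower_frame_bound inner_frame_op_self by simp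

lemma frame_op_upper: "inner (S x) x \<le> B * (norm x)\<^sup>2"
  using upper_frame_bound inner_frame_op_self by simp

lemma norm_frame_op_lower: "A * norm x \<le> norm (S x)"
proof -
  have "norm x * (A * norm x) \<le> norm x * norm (S x)"
    using frame_op_lower[of x] norm_cauchy_schwarz[of "S x" x]
    by (simp add: power2_eq_square algebra_simps)
  then show ?thesis
    by (cases "norm x = 0") (simp_all add: mult_le_cancel_left)
qed

lemma inj_frame_op: "inj S"
proof (rule injI)
  fix x y
  assume "S x = S y"
  then have "A * norm (x - y) \<le> 0"
    using norm_frame_op_lower[of "x - y"] linear_frame_op by (simp add: linear_diff)
  then show "x = y"
    using frame_bounds_pos by (simp add: mult_le_0_iff)
qed

lemma frame_op_energy_contraction:
  "inner (S (r - (1/B) *\<^sub>R S r)) (r - (1/B) *\<^sub>R S r) \<le> (1 - A/B) * inner (S r) r"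
proof -
  define s where "s = S r"
  have "inner (S (r - (1/B) *\<^sub>R s)) (r - (1/B) *\<^sub>R s)
      = inner (S r) r - 2 / B * inner s s + (1/B)\<^sup>2 * inner (S s) s"
    using linear_frame_op frame_op_symmetric[of s r]
    by (simp add: s_def linear_diff linear_scale inner_diff_left inner_diff_right power2_eq_square
        algebra_simps)
  also have "\<dots> \<le> inner (S r) r - inner s s / B"
  proof -
    have "inner (S s) s \<le> B * inner s s"
      using frame_op_upper[of s] by (simp add: power2_norm_eq_inner)
    then have "(1/B)\<^sup>2 * inner (S s) s \<le> (1/B)\<^sup>2 * (B * inner s s)"
      by (rule mult_left_mono) simp
    also have "\<dots> = inner s s / B"
      using frame_bounds_pos by (simp add: power2_eq_square)
    finally show ?thesis
      by simp
  qed
  also have "\<dots> \<le> (1 - A/B) * inner (S r) r"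
  proof -
    have "A * inner (S r) r \<le> A * (norm s * norm r)"
      using norm_cauchy_schwarz[of "S r" r] frame_bounds_pos by (simp add: s_def)
    also have "\<dots> = norm s * (A * norm r)"
      by simp
    also have "\<dots> \<le> norm s * norm s"
      using norm_frame_op_lower[of r] by (simp add: s_def mult_left_mono)
    also have "\<dots> = inner s s"
      by (simp add: power2_norm_eq_inner flip: power2_eq_square)
    finally have "A * inner (S r) r \<le> inner s s" .
    then show ?thesis
      using frame_bounds_pos by (simp add: field_simps)
  qed
  finally show ?thesis
    by (simp add: s_def)
qed

lemma summable_frame_residuals: "summable (\<lambda>j. ((\<lambda>r. r - (1/B) *\<^sub>R S r) ^^ j) z)"
proof -
  define R where "R = (\<lambda>r. r - (1/B) *\<^sub>R S r)"
  define q where "q = 1 - A/B"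
  have q: "0 \<le> q" "q < 1"
    using frame_bounds_pos by (auto simp: q_def field_simps)
  have energy: "inner (S ((R ^^ j) z)) ((R ^^ j) z) \<le> q ^ j * inner (S z) z" for j
  proof (induction j)
    case 0
    then show ?case
      by simp
  next
    case (Suc j)
    have "inner (S ((R ^^ Suc j) z)) ((R ^^ Suc j) z) \<le> q * inner (S ((R ^^ j) z)) ((R ^^ j) z)"
      unfolding funpow.simps comp_apply q_def R_def by (rule frame_op_energy_contraction)
    also have "\<dots> \<le> q * (q ^ j * inner (S z) z)"
      using Suc q by (intro mult_left_mono) auto
    finally show ?case
      by simp
  qed
  have "norm ((R ^^ j) z) \<le> sqrt (B / A) * norm z * sqrt q ^ j" for j
  proof -
    have "A * (norm ((R ^^ j) z))\<^sup>2 \<le> q ^ j * (B * (norm z)\<^sup>2)"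
      using frame_op_lower energy[of j] mult_left_mono[OF frame_op_upper[of z] zero_le_power[OF q(1)]]
      by (meson order_trans)
    then have "(norm ((R ^^ j) z))\<^sup>2 \<le> B / A * (norm z)\<^sup>2 * q ^ j"
      using frame_bounds_pos by (simp add: field_simps)
    then have "norm ((R ^^ j) z) \<le> sqrt (B / A * (norm z)\<^sup>2 * q ^ j)"
      by (rule real_le_rsqrt)
    then show ?thesis
      by (simp only: real_sqrt_mult real_sqrt_power[of q] real_sqrt_abs abs_norm_cancel)
  qed
  moreover have "summable (\<lambda>j. sqrt (B / A) * norm z * sqrt q ^ j)"
    using q by (intro summable_mult summable_geometric) simp
  ultimately have "summable (\<lambda>j. (R ^^ j) z)"
    by (rule summable_comparison_complete)
  then show ?thesis
    by (simp only: R_def)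
qed

text \<open>With \<open>r\<^sub>j = (id - S/B)\<^sup>j z\<close> one has \<open>S (r\<^sub>j / B) = r\<^sub>j - r\<^sub>j\<^sub>+\<^sub>1\<close>, so \<open>S (\<Sum>j. r\<^sub>j / B)\<close>
  telescopes to \<open>z\<close>; moving \<open>S\<close> inside the sum needs only its symmetry, not a norm bound.\<close>

lemma surj_frame_op: "surj S"
proof -
  have "z \<in> range S" for z
  proof -
    define r where "r j = ((\<lambda>r. r - (1/B) *\<^sub>R S r) ^^ j) z" for j
    have "summable r"
      unfolding r_def by (rule summable_frame_residuals)
    then have "(\<lambda>j. r j - r (Suc j)) sums (r 0 - 0)"
      by (intro telescope_sums' summable_LIMSEQ_zero)
    moreover have "r j - r (Suc j) = S ((1/B) *\<^sub>R r j)" for j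
      using linear_frame_op by (simp add: r_def linear_scale)
    moreover have "r 0 = z"
      by (simp add: r_def)
    ultimately have "(\<lambda>j. S ((1/B) *\<^sub>R r j)) sums z"
      by simp
    then have "S (\<Sum>j. (1/B) *\<^sub>R r j) = z"
      using symmetric_sums_unique[OF frame_op_symmetric] summable_sums[OF summable_scaleR_right[OF \<open>summable r\<close>]]
      by blast
    then show ?thesis
      by (metis rangeI)
  qed
  then show ?thesis
    by blast
qed

abbreviation G :: "'a \<Rightarrow> 'a" where "G \<equiv> inv S"

lemma frame_op_inv [simp]: "S (G y) = y"
  by (rule surj_f_inv_f[OF surj_frame_op])

lemma inv_frame_op [simp]: "G (S x) = x"
  by (rule inv_f_f[OF inj_frame_op])

lemma inv_frame_op_symmetric: "inner (G x) y = inner x (G y)"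
  using frame_op_symmetric[of "G x" "G y"] by simp

lemma inv_frame_op_Iop: "G (Iop x) = Iop (G x)"
  by (metis frame_op_Iop frame_op_inv inv_frame_op)

lemma linear_inv_frame_op: "linear G"
  by (rule linear_if_symmetric[OF inv_frame_op_symmetric])

lemma norm_inv_frame_op_le: "A * norm (G x) \<le> norm x"
  using norm_frame_op_lower[of "G x"] by simp

lemma bounded_linear_inv_frame_op: "bounded_linear G"
proof -
  have "norm (G x) \<le> norm x * (1 / A)" for x
    using norm_inv_frame_op_le[of x] frame_bounds_pos by (simp add: field_simps)
  then show ?thesis
    using linear_inv_frame_op unfolding bounded_linear_def bounded_linear_axioms_def by blast
qed

lemma cinner_inv_frame_op_left: "cinner_cs Iop (G u) x = cinner_cs Iop u (G x)"
  by (rule cinner_symmetric_left[OF inv_frame_op_symmetric inv_frame_op_Iop])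

lemma suminf_frame_coeffs_inv_frame_op:
  "(\<Sum>n. (cmod (cinner_cs Iop (f n) (G x)))\<^sup>2) = inner x (G x)"
  using inner_frame_op_self[of "G x"] by (simp add: inner_commute)

lemma inner_inv_frame_op_nonneg: "0 \<le> inner x (G x)"
  unfolding suminf_frame_coeffs_inv_frame_op[symmetric]
  by (intro suminf_nonneg summable_frame_coeffs) simp

lemma inner_inv_frame_op_upper: "inner x (G x) \<le> 1 / A * (norm x)\<^sup>2"
proof -
  have "inner x (G x) \<le> norm x * norm (G x)"
    by (rule norm_cauchy_schwarz)
  also have "\<dots> \<le> norm x * (norm x / A)"
    using norm_inv_frame_op_le[of x] frame_bounds_pos by (intro mult_left_mono) (auto simp: field_simps)
  finally show ?thesis
    by (simp add: power2_eq_square)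
qed

lemma inner_inv_frame_op_lower: "1 / B * (norm x)\<^sup>2 \<le> inner x (G x)"
proof -
  note nonneg = inner_inv_frame_op_nonneg[of x]
  have "(norm x)\<^sup>2 = inner (S (G x)) x"
    by (simp add: power2_norm_eq_inner)
  also have "\<dots> \<le> sqrt (\<Sum>n. (cmod (cinner_cs Iop (f n) (G x)))\<^sup>2) * sqrt (\<Sum>n. (cmod (cinner_cs Iop (f n) x))\<^sup>2)"
    by (rule sums_inner_le_sqrt_suminf_squares[OF summable_frame_coeffs summable_frame_coeffs inner_frame_op_sums])
  also have "\<dots> \<le> sqrt (inner x (G x)) * sqrt (B * (norm x)\<^sup>2)"
    unfolding suminf_frame_coeffs_inv_frame_op using nonneg
    by (intro mult_left_mono real_sqrt_le_mono upper_frame_bound) simp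
  finally have "((norm x)\<^sup>2)\<^sup>2 \<le> (sqrt (inner x (G x)) * sqrt (B * (norm x)\<^sup>2))\<^sup>2"
    by (rule power_mono) simp
  then have "(norm x)\<^sup>2 * (norm x)\<^sup>2 \<le> (inner x (G x) * B) * (norm x)\<^sup>2"
    using nonneg frame_bounds_pos by (simp add: power_mult_distrib power2_eq_square[of "(norm x)\<^sup>2"])
  then have "(norm x)\<^sup>2 \<le> inner x (G x) * B"
    by (rule le_if_mult_self_le) (use nonneg frame_bounds_pos in auto)
  then show ?thesis
    using frame_bounds_pos by (simp add: field_simps)
qed

lemma canonical_dual_frame_bounds: "hilbert_frame_bounds Iop (\<lambda>n. G (f n)) (1/B) (1/A)"
proof -
  have coeffs: "(\<lambda>n. (cmod (cinner_cs Iop (G (f n)) x))\<^sup>2) = (\<lambda>n. (cmod (cinner_cs Iop (f n) (G x)))\<^sup>2)" for x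
    by (simp add: cinner_inv_frame_op_left)
  have "0 < 1 / B" "1 / B \<le> 1 / A"
    using frame_bounds_pos by (auto simp: field_simps)
  then show ?thesis
    unfolding hilbert_frame_bounds_def krein_frame_bounds_def coeffs suminf_frame_coeffs_inv_frame_op
    using summable_frame_coeffs inner_inv_frame_op_upper inner_inv_frame_op_lower by blast
qed

lemma canonical_dual_frame: "hilbert_dual_frame Iop (\<lambda>n. G (f n)) f"
  unfolding hilbert_dual_frame_def hilbert_frame_def
proof (intro conjI allI exI)
  show "hilbert_frame_bounds Iop (\<lambda>n. G (f n)) (1/B) (1/A)"
    by (rule canonical_dual_frame_bounds)
  fix x
  show "(\<lambda>n. scaleC_cs Iop (cinner_cs Iop (G (f n)) x) (f n)) sums x"
    using frame_op_sums[of "G x"] by (simp add: cinner_inv_frame_op_left)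
  show "(\<lambda>n. scaleC_cs Iop (cinner_cs Iop (f n) x) (G (f n))) sums x"
    using bounded_linear.sums[OF bounded_linear_inv_frame_op frame_op_sums[of x]]
    by (simp add: scaleC_commute[OF linear_inv_frame_op inv_frame_op_Iop])
qed

end

locale krein =
  fixes Iop :: "'a::{real_inner,complete_space} \<Rightarrow> 'a"
    and kip :: "'a \<Rightarrow> 'a \<Rightarrow> complex"
    and J :: "'a \<Rightarrow> 'a"
  assumes krein_space: "krein_space Iop kip J"

sublocale krein \<subseteq> complex_structure_space Iop
  using krein_space by unfold_locales (simp add: krein_space_def)

context krein
begin

lemma linear_J: "linear J"
  using krein_space unfolding krein_space_def by blast

lemma J_J [simp]: "J (J x) = x"
  using krein_space unfolding krein_space_def by blast

lemma J_Iop: "J (Iop x) = Iop (J x)"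
  using krein_space unfolding krein_space_def by blast

lemma kip_eq_cinner: "kip x y = cinner_cs Iop x (J y)"
  using krein_space J_J unfolding krein_space_def by metis

lemma J_symmetric: "inner (J x) y = inner x (J y)"
proof -
  have "cinner_cs Iop y (J x) = cnj (cinner_cs Iop x (J y))"
    using krein_space unfolding krein_space_def kip_eq_cinner by blast
  then show ?thesis
    by (simp add: cinner_cs_def complex_eq_iff inner_commute)
qed

lemma norm_J [simp]: "norm (J x) = norm x"
  by (simp add: norm_eq_sqrt_inner J_symmetric)

lemma surj_J: "surj J"
  by (metis J_J surjI)

lemma bounded_linear_J: "bounded_linear J"
  using linear_J unfolding bounded_linear_def bounded_linear_axioms_def
  by (metis norm_J order_refl mult_1_right)

lemma cinner_J_left: "cinner_cs Iop (J u) x = cinner_cs Iop u (J x)"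
  by (rule cinner_symmetric_left[OF J_symmetric J_Iop])

lemma scaleC_J: "J (scaleC_cs Iop c u) = scaleC_cs Iop c (J u)"
  by (rule scaleC_commute[OF linear_J J_Iop])

lemma krein_frame_bounds_iff_hilbert:
  "krein_frame_bounds kip h a b \<longleftrightarrow> hilbert_frame_bounds Iop h a b"
  unfolding hilbert_frame_bounds_def
  by (rule krein_frame_bounds_transfer[where T = J]) (simp_all add: kip_eq_cinner surj_J)

lemma hilbert_frame_bounds_J_iff:
  "hilbert_frame_bounds Iop (\<lambda>n. J (h n)) a b \<longleftrightarrow> hilbert_frame_bounds Iop h a b"
  unfolding hilbert_frame_bounds_def
  by (rule krein_frame_bounds_transfer[where T = J]) (simp_all add: cinner_J_left surj_J)

lemma hilbert_dual_frame_J: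
  assumes "hilbert_dual_frame Iop g f"
  shows "hilbert_dual_frame Iop (\<lambda>n. J (g n)) (\<lambda>n. J (f n))"
proof -
  have "hilbert_frame Iop g"
    and rec: "\<And>x. (\<lambda>n. scaleC_cs Iop (cinner_cs Iop (g n) x) (f n)) sums x"
    and rec': "\<And>x. (\<lambda>n. scaleC_cs Iop (cinner_cs Iop (f n) x) (g n)) sums x"
    using assms unfolding hilbert_dual_frame_def by blast+
  moreover have "(\<lambda>n. scaleC_cs Iop (cinner_cs Iop (J (g n)) x) (J (f n))) sums x" for x
    using bounded_linear.sums[OF bounded_linear_J rec[of "J x"]] by (simp add: scaleC_J cinner_J_left)
  moreover have "(\<lambda>n. scaleC_cs Iop (cinner_cs Iop (J (f n)) x) (J (g n))) sums x" for x
    using bounded_linear.sums[OF bounded_linear_J rec'[of "J x"]] by (simp add: scaleC_J cinner_J_left)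
  ultimately show ?thesis
    unfolding hilbert_dual_frame_def hilbert_frame_def hilbert_frame_bounds_J_iff by blast
qed

lemma krein_dual_frame_J_if_hilbert_dual_frame:
  assumes "hilbert_dual_frame Iop g f"
  shows "krein_dual_frame Iop kip (\<lambda>n. J (g n)) f"
  using assms
  unfolding krein_dual_frame_def krein_frame_def hilbert_dual_frame_def hilbert_frame_def
    krein_frame_bounds_iff_hilbert hilbert_frame_bounds_J_iff
  by (simp add: kip_eq_cinner cinner_J_left)

end

locale krein_frame_space = krein +
  fixes k :: "nat \<Rightarrow> 'a::{real_inner,complete_space}" and A B :: real
  assumes krein_bounds: "krein_frame_bounds kip k A B"

sublocale krein_frame_space \<subseteq> hilbert_frame_space Iop k A B
  by unfold_locales (use krein_bounds in \<open>simp add: krein_frame_bounds_iff_hilbert\<close>)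

context krein_frame_space
begin

lemma krein_frame_op_eq: "frame_op Iop kip k = S \<circ> J"
  by (simp add: fun_eq_iff frame_op_def kip_eq_cinner)

lemma inv_krein_frame_op: "inv (frame_op Iop kip k) y = J (G y)"
proof (rule inv_f_eq)
  show "inj (frame_op Iop kip k)"
    unfolding krein_frame_op_eq by (intro inj_compose inj_frame_op) (metis J_J injI)
  show "frame_op Iop kip k (J (G y)) = y"
    by (simp add: krein_frame_op_eq)
qed

lemma krein_canonical_dual_frames:
  "krein_dual_frame Iop kip (\<lambda>n. inv (frame_op Iop kip k) (k n)) k
   \<and> krein_dual_frame Iop kip (\<lambda>n. J (inv (frame_op Iop kip k) (k n))) (\<lambda>n. J (k n))
   \<and> hilbert_dual_frame Iop (\<lambda>n. J (inv (frame_op Iop kip k) (k n))) k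
   \<and> hilbert_dual_frame Iop (\<lambda>n. inv (frame_op Iop kip k) (k n)) (\<lambda>n. J (k n))"
  using canonical_dual_frame hilbert_dual_frame_J[OF canonical_dual_frame]
    krein_dual_frame_J_if_hilbert_dual_frame[OF canonical_dual_frame]
    krein_dual_frame_J_if_hilbert_dual_frame[OF hilbert_dual_frame_J[OF canonical_dual_frame]]
  by (simp add: inv_krein_frame_op)

lemma krein_canonical_dual_frame_bounds:
  "krein_frame_bounds kip (\<lambda>n. inv (frame_op Iop kip k) (k n)) (1 / B) (1 / A)
   \<and> krein_frame_bounds kip (\<lambda>n. J (inv (frame_op Iop kip k) (k n))) (1 / B) (1 / A)
   \<and> hilbert_frame_bounds Iop (\<lambda>n. J (inv (frame_op Iop kip k) (k n))) (1 / B) (1 / A)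
   \<and> hilbert_frame_bounds Iop (\<lambda>n. inv (frame_op Iop kip k) (k n)) (1 / B) (1 / A)"
  using canonical_dual_frame_bounds
  by (simp add: inv_krein_frame_op krein_frame_bounds_iff_hilbert hilbert_frame_bounds_J_iff)

end

theorem proposition3p8:
  fixes Iop J :: "'a::{real_inner,complete_space} \<Rightarrow> 'a"
    and kip :: "'a \<Rightarrow> 'a \<Rightarrow> complex"
    and k :: "nat \<Rightarrow> 'a"
  assumes "krein_space Iop kip J"
    and "krein_frame kip k"
  defines "S \<equiv> frame_op Iop kip k"
  shows "krein_dual_frame Iop kip (\<lambda>n. inv S (k n)) k
       \<and> krein_dual_frame Iop kip (\<lambda>n. J (inv S (k n))) (\<lambda>n. J (k n))
       \<and> hilbert_dual_frame Iop (\<lambda>n. J (inv S (k n))) k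
       \<and> hilbert_dual_frame Iop (\<lambda>n. inv S (k n)) (\<lambda>n. J (k n))
       \<and> (\<forall>A B. krein_frame_bounds kip k A B \<longrightarrow>
            krein_frame_bounds kip (\<lambda>n. inv S (k n)) (1 / B) (1 / A)
          \<and> krein_frame_bounds kip (\<lambda>n. J (inv S (k n))) (1 / B) (1 / A)
          \<and> hilbert_frame_bounds Iop (\<lambda>n. J (inv S (k n))) (1 / B) (1 / A)
          \<and> hilbert_frame_bounds Iop (\<lambda>n. inv S (k n)) (1 / B) (1 / A))"
proof -
  have frame_space: "krein_frame_space Iop kip J k A B" if "krein_frame_bounds kip k A B" for A B
    using assms(1) that by (simp add: krein_frame_space_def krein_frame_space_axioms_def krein_def)
  obtain A B where "krein_frame_bounds kip k A B"
    using assms(2) unfolding krein_frame_def by blast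
  then show ?thesis
    unfolding S_def
    using krein_frame_space.krein_canonical_dual_frames[OF frame_space]
      krein_frame_space.krein_canonical_dual_frame_bounds[OF frame_space]
    by blast
qed

end
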